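(* Let $X$ be the space of all sequences of the form $c=\sum_{k=1}^N a_k\star b_k$ (finite sums) with $a_k,b_k$ finitely supported sequences, normed by $\|c\|_X=\inf\sum_{k=1}^N\|a_k\|_{\ell^2(\mathbb{N})}\|b_k\|_{\ell^2(\mathbb{N})}$ over all such finite representations, and let $\mathcal{X}$ be its Banach space completion. For $m=M(\alpha)\in\mathcal{M}$ let $Jm(c)=(\alpha,c)$, $c\in X$. Then $Jm$ extends to a bounded linear functional on $\mathcal{X}$ for every $m\in\mathcal{M}$, and $J\colon\mathcal{M}\to\mathcal{X}^*$ is an isometric isomorphism.
   Context: For a sequence $\alpha\colon\mathbb{N}\to\mathbb{C}$, $M(\alpha)$ is defined by $\langle M(\alpha)a,b\rangle_{\ell^2(\mathbb{N})}=\sum_{n,m}a(n)\overline{b(m)}\alpha(nm)$ for finitely supported $a,b$; $\mathcal{M}$ is the space of those $M(\alpha)$ extending to bounded operators on $\ell^2(\mathbb{N})$, with the operator norm. Dirichlet convolution: $(a\star b)(n)=\sum_{k\mid n}a(k)\overline{b(n/k)}$; $(a,b)=\sum_n a(n)b(n)$ is the bilinear pairing. *)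

theory Defs
  imports "HOL-Analysis.Analysis"
begin

text \<open>Sequences on the positive integers are modelled as functions nat => complex;
  the value at 0 is irrelevant (finitely supported sequences vanish at 0).\<close>

definition supp_seq :: "(nat \<Rightarrow> complex) \<Rightarrow> nat set" where
  "supp_seq a = {n. a n \<noteq> 0}"

definition fin_supp :: "(nat \<Rightarrow> complex) \<Rightarrow> bool" where
  "fin_supp a \<longleftrightarrow> finite (supp_seq a) \<and> a 0 = 0"

definition l2norm :: "(nat \<Rightarrow> complex) \<Rightarrow> real" where
  "l2norm a = sqrt (\<Sum>n\<in>supp_seq a. (cmod (a n))^2)"

definition Mform :: "(nat \<Rightarrow> complex) \<Rightarrow> (nat \<Rightarrow> complex) \<Rightarrow> (nat \<Rightarrow> complex) \<Rightarrow> complex" where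
  "Mform \<alpha> a b = (\<Sum>n\<in>supp_seq a. \<Sum>m\<in>supp_seq b. a n * cnj (b m) * \<alpha> (n * m))"

text \<open>M(alpha) extends to a bounded operator on l^2(N).\<close>
definition M_bounded :: "(nat \<Rightarrow> complex) \<Rightarrow> bool" where
  "M_bounded \<alpha> \<longleftrightarrow> (\<exists>C. \<forall>a b. fin_supp a \<longrightarrow> fin_supp b \<longrightarrow>
      cmod (Mform \<alpha> a b) \<le> C * l2norm a * l2norm b)"

definition M_norm :: "(nat \<Rightarrow> complex) \<Rightarrow> real" where
  "M_norm \<alpha> = Sup {cmod (Mform \<alpha> a b) | a b.
      fin_supp a \<and> fin_supp b \<and> l2norm a \<le> 1 \<and> l2norm b \<le> 1}"

definition dconv :: "(nat \<Rightarrow> complex) \<Rightarrow> (nat \<Rightarrow> complex) \<Rightarrow> nat \<Rightarrow> complex" where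
  "dconv a b n = (if n = 0 then 0 else (\<Sum>k | k dvd n. a k * cnj (b (n div k))))"

definition pairing :: "(nat \<Rightarrow> complex) \<Rightarrow> (nat \<Rightarrow> complex) \<Rightarrow> complex" where
  "pairing \<alpha> c = (\<Sum>n\<in>supp_seq c. \<alpha> n * c n)"

definition repr_sum :: "((nat \<Rightarrow> complex) \<times> (nat \<Rightarrow> complex)) list \<Rightarrow> nat \<Rightarrow> complex" where
  "repr_sum ps = (\<lambda>n. \<Sum>p\<leftarrow>ps. dconv (fst p) (snd p) n)"

definition valid_repr :: "((nat \<Rightarrow> complex) \<times> (nat \<Rightarrow> complex)) list \<Rightarrow> bool" where
  "valid_repr ps \<longleftrightarrow> (\<forall>p\<in>set ps. fin_supp (fst p) \<and> fin_supp (snd p))"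

definition Xspace :: "(nat \<Rightarrow> complex) set" where
  "Xspace = {c. \<exists>ps. valid_repr ps \<and> c = repr_sum ps}"

definition Xnorm :: "(nat \<Rightarrow> complex) \<Rightarrow> real" where
  "Xnorm c = Inf {(\<Sum>p\<leftarrow>ps. l2norm (fst p) * l2norm (snd p)) | ps.
      valid_repr ps \<and> c = repr_sum ps}"

text \<open>Linear functionals on X that are bounded w.r.t. the X-norm (= elements of the dual
  of the completion of X), and their dual norm.\<close>
definition linear_on_X :: "((nat \<Rightarrow> complex) \<Rightarrow> complex) \<Rightarrow> bool" where
  "linear_on_X L \<longleftrightarrow> (\<forall>c\<in>Xspace. \<forall>d\<in>Xspace. L (\<lambda>n. c n + d n) = L c + L d) \<and>
     (\<forall>c\<in>Xspace. \<forall>s::complex. L (\<lambda>n. s * c n) = s * L c)"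

definition bounded_on_X :: "((nat \<Rightarrow> complex) \<Rightarrow> complex) \<Rightarrow> bool" where
  "bounded_on_X L \<longleftrightarrow> (\<exists>C. \<forall>c\<in>Xspace. cmod (L c) \<le> C * Xnorm c)"

definition dual_norm_X :: "((nat \<Rightarrow> complex) \<Rightarrow> complex) \<Rightarrow> real" where
  "dual_norm_X L = Sup {cmod (L c) | c. c \<in> Xspace \<and> Xnorm c \<le> 1}"

end

theory Submission
  imports Defs
begin

text \<open>The key identity is (\<alpha>, a \<star> b) = \<langle>M(\<alpha>) a, b\<rangle>: both sides expand to the sum of
  \<alpha>(km) a(k) conj(b(m)) over k, m. Hence the pairing with \<alpha> is bounded by the operator norm
  of M(\<alpha>) on each term of a representation, so on X it has norm at most that of M(\<alpha>); testing
  on single convolutions a \<star> b with unit vectors a, b gives the reverse inequality.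
  Conversely, a bounded functional L on X is the pairing with \<alpha>(n) = L(delta n), since
  delta n = delta n \<star> delta 1 lies in X and every element of X is a finite combination
  of these unit vectors; boundedness of M(\<alpha>) is then the bound of L on single convolutions.\<close>

definition delta :: "nat \<Rightarrow> nat \<Rightarrow> complex" where
  "delta j = (\<lambda>n. if n = j then 1 else 0)"

lemma supp_seq_delta: "supp_seq (delta j) = {j}"
  by (auto simp: supp_seq_def delta_def)

lemma fin_supp_delta: "j > 0 \<Longrightarrow> fin_supp (delta j)"
  unfolding fin_supp_def supp_seq_delta by (simp add: delta_def)

lemma supp_seq_add: "supp_seq (\<lambda>n. c n + d n) \<subseteq> supp_seq c \<union> supp_seq d"
  by (auto simp: supp_seq_def)

lemma supp_seq_scale: "s \<noteq> 0 \<Longrightarrow> supp_seq (\<lambda>n. s * a n) = supp_seq a"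
  by (auto simp: supp_seq_def)

lemma finite_supp_seq_sum:
  "finite I \<Longrightarrow> (\<And>i. i \<in> I \<Longrightarrow> finite (supp_seq (f i))) \<Longrightarrow>
    finite (supp_seq (\<lambda>n. \<Sum>i\<in>I. f i n))"
proof (induction I rule: finite_induct)
  case empty
  then show ?case by (simp add: supp_seq_def)
next
  case (insert x F)
  then show ?case
    using supp_seq_add[of "f x" "\<lambda>n. \<Sum>i\<in>F. f i n"] by (auto intro: finite_subset)
qed

lemma finite_supp_seq_sum_list:
  "(\<And>p. p \<in> set ps \<Longrightarrow> finite (supp_seq (f p))) \<Longrightarrow>
    finite (supp_seq (\<lambda>n. \<Sum>p\<leftarrow>ps. f p n))"
proof (induction ps)
  case Nil
  then show ?case by (simp add: supp_seq_def)
next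
  case (Cons x xs)
  then show ?case
    using supp_seq_add[of "f x" "\<lambda>n. \<Sum>p\<leftarrow>xs. f p n"] by (auto intro: finite_subset)
qed

lemma fin_supp_scale: "fin_supp a \<Longrightarrow> fin_supp (\<lambda>n. s * a n)"
  unfolding fin_supp_def by (auto intro: finite_subset[of _ "supp_seq a"] simp: supp_seq_def)

lemma norm_sum_list_le:
  fixes f :: "'a \<Rightarrow> 'b::real_normed_vector"
  shows "norm (\<Sum>x\<leftarrow>xs. f x) \<le> (\<Sum>x\<leftarrow>xs. norm (f x))"
  by (induction xs) (auto intro: norm_triangle_le)

lemma pairing_eq_sum_superset:
  assumes "finite S" "supp_seq c \<subseteq> S"
  shows "pairing \<alpha> c = (\<Sum>n\<in>S. \<alpha> n * c n)"
  unfolding pairing_def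
  by (rule sum.mono_neutral_left) (use assms in \<open>auto simp: supp_seq_def\<close>)

lemma pairing_zero: "pairing \<alpha> (\<lambda>n. 0) = 0"
  by (simp add: pairing_def supp_seq_def)

lemma pairing_add:
  assumes "finite (supp_seq c)" "finite (supp_seq d)"
  shows "pairing \<alpha> (\<lambda>n. c n + d n) = pairing \<alpha> c + pairing \<alpha> d"
proof -
  let ?S = "supp_seq c \<union> supp_seq d"
  have "pairing \<alpha> (\<lambda>n. c n + d n) = (\<Sum>n\<in>?S. \<alpha> n * (c n + d n))"
    using assms supp_seq_add[of c d] by (intro pairing_eq_sum_superset) auto
  also have "\<dots> = (\<Sum>n\<in>?S. \<alpha> n * c n) + (\<Sum>n\<in>?S. \<alpha> n * d n)"
    by (simp add: distrib_left sum.distrib)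
  also have "\<dots> = pairing \<alpha> c + pairing \<alpha> d"
    using assms pairing_eq_sum_superset[of ?S c \<alpha>] pairing_eq_sum_superset[of ?S d \<alpha>] by auto
  finally show ?thesis .
qed

lemma pairing_scale: "pairing \<alpha> (\<lambda>n. s * c n) = s * pairing \<alpha> c"
  by (cases "s = 0") (simp_all add: pairing_zero pairing_def supp_seq_scale sum_distrib_left mult_ac)

lemma pairing_sum:
  "finite I \<Longrightarrow> (\<And>i. i \<in> I \<Longrightarrow> finite (supp_seq (f i))) \<Longrightarrow>
    pairing \<alpha> (\<lambda>n. \<Sum>i\<in>I. f i n) = (\<Sum>i\<in>I. pairing \<alpha> (f i))"
proof (induction I rule: finite_induct)
  case empty
  then show ?case by (simp add: pairing_zero)
next
  case (insert x F)
  then show ?case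
    using pairing_add[of "f x" "\<lambda>n. \<Sum>i\<in>F. f i n" \<alpha>] finite_supp_seq_sum[of F f] by auto
qed

lemma pairing_sum_list:
  "(\<And>p. p \<in> set ps \<Longrightarrow> finite (supp_seq (f p))) \<Longrightarrow>
    pairing \<alpha> (\<lambda>n. \<Sum>p\<leftarrow>ps. f p n) = (\<Sum>p\<leftarrow>ps. pairing \<alpha> (f p))"
proof (induction ps)
  case Nil
  then show ?case by (simp add: pairing_zero)
next
  case (Cons x xs)
  then show ?case
    using pairing_add[of "f x" "\<lambda>n. \<Sum>p\<leftarrow>xs. f p n" \<alpha>] finite_supp_seq_sum_list[of xs f]
    by auto
qed

lemma pairing_delta: "pairing \<alpha> (delta j) = \<alpha> j"
  by (simp add: pairing_def supp_seq_delta) (simp add: delta_def)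

subsection \<open>Dirichlet convolution and the form of M(\<alpha>)\<close>

lemma dconv_eq_sum_delta:
  assumes "fin_supp a" "fin_supp b"
  shows "dconv a b = (\<lambda>n. \<Sum>k\<in>supp_seq a. \<Sum>m\<in>supp_seq b. a k * cnj (b m) * delta (k * m) n)"
proof
  fix n
  have a0: "a 0 = 0" and b0: "b 0 = 0" and fa: "finite (supp_seq a)" and fb: "finite (supp_seq b)"
    using assms by (auto simp: fin_supp_def)
  have pos: "k > 0" if "k \<in> supp_seq a" for k
    using that a0 by (auto simp: supp_seq_def intro: gr0I)
  show "dconv a b n = (\<Sum>k\<in>supp_seq a. \<Sum>m\<in>supp_seq b. a k * cnj (b m) * delta (k * m) n)"
  proof (cases "n = 0")
    case True
    have "delta (k * m) n = 0" if "k \<in> supp_seq a" "m \<in> supp_seq b" for k m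
      using that a0 b0 True unfolding supp_seq_def delta_def by (cases k; cases m) auto
    then have "(\<Sum>k\<in>supp_seq a. \<Sum>m\<in>supp_seq b. a k * cnj (b m) * delta (k * m) n) = 0"
      by simp
    then show ?thesis using True by (simp add: dconv_def)
  next
    case False
    have inner: "(\<Sum>m\<in>supp_seq b. a k * cnj (b m) * delta (k * m) n)
        = (if k dvd n then a k * cnj (b (n div k)) else 0)" if k: "k \<in> supp_seq a" for k
    proof -
      have "(\<Sum>m\<in>supp_seq b. a k * cnj (b m) * delta (k * m) n)
          = (\<Sum>m\<in>supp_seq b. if m = n div k then (if k dvd n then a k * cnj (b m) else 0) else 0)"
        using pos[OF k] by (intro sum.cong) (auto simp: delta_def)
      also have "\<dots> = (if k dvd n then a k * cnj (b (n div k)) else 0)"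
        using fb by (simp add: sum.delta') (auto simp: supp_seq_def)
      finally show ?thesis .
    qed
    have "(\<Sum>k\<in>supp_seq a. \<Sum>m\<in>supp_seq b. a k * cnj (b m) * delta (k * m) n)
        = (\<Sum>k\<in>{k\<in>supp_seq a. k dvd n}. a k * cnj (b (n div k)))"
      using fa by (simp add: inner sum.inter_filter)
    also have "\<dots> = (\<Sum>k | k dvd n. a k * cnj (b (n div k)))"
      by (rule sum.mono_neutral_left) (use False in \<open>auto simp: supp_seq_def finite_divisors_nat\<close>)
    finally show ?thesis using False by (simp add: dconv_def)
  qed
qed

lemma finite_supp_seq_scaled_delta: "finite (supp_seq (\<lambda>n. s * delta j n))"
  by (rule finite_subset[of _ "{j}"]) (auto simp: supp_seq_def delta_def)

lemma finite_supp_seq_dconv: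
  "fin_supp a \<Longrightarrow> fin_supp b \<Longrightarrow> finite (supp_seq (dconv a b))"
  by (auto simp: dconv_eq_sum_delta fin_supp_def
      intro!: finite_supp_seq_sum finite_supp_seq_scaled_delta)

lemma pairing_dconv:
  assumes "fin_supp a" "fin_supp b"
  shows "pairing \<alpha> (dconv a b) = Mform \<alpha> a b"
proof -
  have fb: "finite (supp_seq b)" using assms by (auto simp: fin_supp_def)
  have "pairing \<alpha> (dconv a b)
      = (\<Sum>k\<in>supp_seq a. \<Sum>m\<in>supp_seq b. pairing \<alpha> (\<lambda>n. a k * cnj (b m) * delta (k * m) n))"
    using assms fb
    by (simp add: dconv_eq_sum_delta pairing_sum fin_supp_def finite_supp_seq_sum
        finite_supp_seq_scaled_delta)
  also have "\<dots> = Mform \<alpha> a b"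
    unfolding Mform_def pairing_scale pairing_delta by (simp add: mult.commute)
  finally show ?thesis .
qed

lemma l2norm_nonneg: "l2norm a \<ge> 0"
  unfolding l2norm_def by (simp add: sum_nonneg)

lemma l2norm_zero: "l2norm (\<lambda>n. 0) = 0"
  by (simp add: l2norm_def supp_seq_def)

lemma l2norm_scale: "l2norm (\<lambda>n. s * a n) = cmod s * l2norm a"
proof (cases "s = 0")
  case True
  then show ?thesis by (simp add: l2norm_zero)
next
  case False
  have "l2norm (\<lambda>n. s * a n) = sqrt ((cmod s)\<^sup>2 * (\<Sum>n\<in>supp_seq a. (cmod (a n))\<^sup>2))"
    unfolding l2norm_def supp_seq_scale[OF False]
    by (simp add: norm_mult power_mult_distrib sum_distrib_left)
  then show ?thesis by (simp add: real_sqrt_mult l2norm_def)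
qed

lemma l2norm_eq_0_iff: "finite (supp_seq a) \<Longrightarrow> l2norm a = 0 \<longleftrightarrow> supp_seq a = {}"
  by (auto simp: l2norm_def sum_nonneg_eq_0_iff supp_seq_def)

lemma fin_supp_zero: "fin_supp (\<lambda>n. 0)"
  by (simp add: fin_supp_def supp_seq_def)

lemma Mform_scale:
  assumes "s \<noteq> 0" "t \<noteq> 0"
  shows "Mform \<alpha> (\<lambda>n. s * a n) (\<lambda>n. t * b n) = s * cnj t * Mform \<alpha> a b"
  unfolding Mform_def supp_seq_scale[OF assms(1)] supp_seq_scale[OF assms(2)]
  by (simp add: sum_distrib_left mult_ac)

lemma bdd_above_Mform_unit_ball:
  assumes "M_bounded \<alpha>"
  shows "bdd_above {cmod (Mform \<alpha> a b) | a b.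
      fin_supp a \<and> fin_supp b \<and> l2norm a \<le> 1 \<and> l2norm b \<le> 1}"
proof -
  obtain C where C: "\<And>a b. fin_supp a \<Longrightarrow> fin_supp b \<Longrightarrow> cmod (Mform \<alpha> a b) \<le> C * l2norm a * l2norm b"
    using assms by (auto simp: M_bounded_def)
  show ?thesis
  proof (rule bdd_aboveI[of _ "max C 0"], clarify)
    fix a b assume ab: "fin_supp a" "fin_supp b" "l2norm a \<le> 1" "l2norm b \<le> 1"
    have "cmod (Mform \<alpha> a b) \<le> C * l2norm a * l2norm b"
      using C ab by simp
    also have "\<dots> \<le> max C 0 * l2norm a * l2norm b"
      by (intro mult_right_mono) (auto simp: l2norm_nonneg)
    also have "\<dots> \<le> max C 0 * 1 * 1"
      by (intro mult_mono) (use ab in \<open>auto simp: l2norm_nonneg\<close>)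
    finally show "cmod (Mform \<alpha> a b) \<le> max C 0" by simp
  qed
qed

lemma Mform_le_M_norm_unit_ball:
  assumes "M_bounded \<alpha>" "fin_supp a" "fin_supp b" "l2norm a \<le> 1" "l2norm b \<le> 1"
  shows "cmod (Mform \<alpha> a b) \<le> M_norm \<alpha>"
  unfolding M_norm_def by (rule cSup_upper) (use assms bdd_above_Mform_unit_ball in auto)

lemma M_norm_nonneg: "M_bounded \<alpha> \<Longrightarrow> M_norm \<alpha> \<ge> 0"
  using Mform_le_M_norm_unit_ball[of \<alpha> "\<lambda>n. 0" "\<lambda>n. 0"]
  by (simp add: fin_supp_zero l2norm_zero Mform_def supp_seq_def)

lemma Mform_le_M_norm:
  assumes "M_bounded \<alpha>" "fin_supp a" "fin_supp b"
  shows "cmod (Mform \<alpha> a b) \<le> M_norm \<alpha> * l2norm a * l2norm b"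
proof (cases "l2norm a = 0 \<or> l2norm b = 0")
  case True
  with assms have "Mform \<alpha> a b = 0"
    by (auto simp: Mform_def fin_supp_def l2norm_eq_0_iff)
  then show ?thesis using True by auto
next
  case False
  define ra rb where "ra = l2norm a" and "rb = l2norm b"
  have ra: "ra > 0" and rb: "rb > 0"
    using False l2norm_nonneg ra_def rb_def by (auto simp: le_less)
  define a' b' where "a' = (\<lambda>n. complex_of_real (1 / ra) * a n)"
    and "b' = (\<lambda>n. complex_of_real (1 / rb) * b n)"
  have "l2norm a' = 1" "l2norm b' = 1"
    unfolding a'_def b'_def l2norm_scale using ra rb ra_def rb_def by (simp_all add: norm_divide)
  moreover have "fin_supp a'" "fin_supp b'"
    unfolding a'_def b'_def using assms by (simp_all add: fin_supp_scale del: of_real_divide)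
  ultimately have "cmod (Mform \<alpha> a' b') \<le> M_norm \<alpha>"
    using Mform_le_M_norm_unit_ball assms by simp
  moreover have "Mform \<alpha> a' b' = complex_of_real (1 / ra) * cnj (complex_of_real (1 / rb)) * Mform \<alpha> a b"
    unfolding a'_def b'_def by (rule Mform_scale) (use ra rb in auto)
  then have "cmod (Mform \<alpha> a' b') = cmod (Mform \<alpha> a b) / (ra * rb)"
    using ra rb by (simp add: norm_mult norm_divide)
  ultimately show ?thesis
    using ra rb by (simp add: pos_divide_le_eq ra_def rb_def mult.assoc)
qed

subsection \<open>The space X and its norm\<close>

definition repr_cost :: "((nat \<Rightarrow> complex) \<times> (nat \<Rightarrow> complex)) list \<Rightarrow> real" where
  "repr_cost ps = (\<Sum>p\<leftarrow>ps. l2norm (fst p) * l2norm (snd p))"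

lemma repr_cost_nonneg: "repr_cost ps \<ge> 0"
  unfolding repr_cost_def by (rule sum_list_nonneg) (auto simp: l2norm_nonneg)

lemma dconv_scale_left: "dconv (\<lambda>n. s * a n) b = (\<lambda>n. s * dconv a b n)"
  by (auto simp: dconv_def sum_distrib_left mult_ac)

lemma repr_sum_scale:
  "repr_sum (map (\<lambda>p. (\<lambda>n. s * fst p n, snd p)) ps) = (\<lambda>n. s * repr_sum ps n)"
  by (simp add: repr_sum_def dconv_scale_left o_def sum_list_const_mult)

lemma zero_in_Xspace: "(\<lambda>n. 0) \<in> Xspace"
  unfolding Xspace_def by (auto intro!: exI[of _ "[]"] simp: valid_repr_def repr_sum_def)

lemma add_in_Xspace:
  assumes "c \<in> Xspace" "d \<in> Xspace"
  shows "(\<lambda>n. c n + d n) \<in> Xspace"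
proof -
  obtain ps qs where "valid_repr ps" "c = repr_sum ps" "valid_repr qs" "d = repr_sum qs"
    using assms by (auto simp: Xspace_def)
  then have "valid_repr (ps @ qs) \<and> (\<lambda>n. c n + d n) = repr_sum (ps @ qs)"
    by (auto simp: valid_repr_def repr_sum_def)
  then show ?thesis unfolding Xspace_def by blast
qed

lemma scale_in_Xspace:
  assumes "c \<in> Xspace"
  shows "(\<lambda>n. s * c n) \<in> Xspace"
proof -
  obtain ps where ps: "valid_repr ps" "c = repr_sum ps"
    using assms by (auto simp: Xspace_def)
  let ?qs = "map (\<lambda>p. (\<lambda>n. s * fst p n, snd p)) ps"
  have "valid_repr ?qs" using ps(1) by (auto simp: valid_repr_def fin_supp_scale)
  moreover have "repr_sum ?qs = (\<lambda>n. s * c n)"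
    unfolding ps(2) by (rule repr_sum_scale)
  ultimately show ?thesis unfolding Xspace_def by (intro CollectI exI[of _ ?qs]) simp
qed

lemma dconv_in_Xspace: "fin_supp a \<Longrightarrow> fin_supp b \<Longrightarrow> dconv a b \<in> Xspace"
  unfolding Xspace_def by (auto intro!: exI[of _ "[(a, b)]"] simp: valid_repr_def repr_sum_def)

lemma delta_in_Xspace:
  assumes "j > 0"
  shows "delta j \<in> Xspace"
proof -
  have "dconv (delta j) (delta 1) = delta j"
    unfolding dconv_eq_sum_delta[OF fin_supp_delta[OF assms] fin_supp_delta[OF zero_less_one]]
    unfolding supp_seq_delta by (simp add: delta_def)
  then show ?thesis
    using dconv_in_Xspace[OF fin_supp_delta[OF assms] fin_supp_delta[OF zero_less_one]] by simp
qed

lemma Xspace_imp_fin_supp: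
  assumes "c \<in> Xspace"
  shows "fin_supp c"
proof -
  obtain ps where ps: "valid_repr ps" "c = repr_sum ps" using assms by (auto simp: Xspace_def)
  have "finite (supp_seq c)" unfolding ps repr_sum_def
    by (rule finite_supp_seq_sum_list) (use ps in \<open>auto simp: valid_repr_def finite_supp_seq_dconv\<close>)
  moreover have "c 0 = 0" unfolding ps repr_sum_def by (simp add: dconv_def)
  ultimately show ?thesis by (simp add: fin_supp_def)
qed

lemma pairing_repr_sum:
  assumes "valid_repr ps"
  shows "pairing \<alpha> (repr_sum ps) = (\<Sum>p\<leftarrow>ps. Mform \<alpha> (fst p) (snd p))"
proof -
  have "pairing \<alpha> (repr_sum ps) = (\<Sum>p\<leftarrow>ps. pairing \<alpha> (dconv (fst p) (snd p)))"
    unfolding repr_sum_def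
    by (rule pairing_sum_list) (use assms in \<open>auto simp: valid_repr_def finite_supp_seq_dconv\<close>)
  also have "\<dots> = (\<Sum>p\<leftarrow>ps. Mform \<alpha> (fst p) (snd p))"
    using assms by (intro arg_cong[where f = sum_list] map_cong) (auto simp: valid_repr_def pairing_dconv)
  finally show ?thesis .
qed

lemma Xnorm_le_repr_cost: "valid_repr ps \<Longrightarrow> Xnorm (repr_sum ps) \<le> repr_cost ps"
  unfolding Xnorm_def repr_cost_def[symmetric]
  by (rule cInf_lower) (auto intro: bdd_belowI[of _ 0] repr_cost_nonneg)

lemma Xnorm_dconv_le: "fin_supp a \<Longrightarrow> fin_supp b \<Longrightarrow> Xnorm (dconv a b) \<le> l2norm a * l2norm b"
  using Xnorm_le_repr_cost[of "[(a, b)]"] by (simp add: valid_repr_def repr_sum_def repr_cost_def)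

lemma le_mult_Xnorm:
  assumes "c \<in> Xspace" "C \<ge> 0"
    and "\<And>ps. valid_repr ps \<Longrightarrow> c = repr_sum ps \<Longrightarrow> x \<le> C * repr_cost ps"
  shows "x \<le> C * Xnorm c"
proof -
  obtain ps0 where ps0: "valid_repr ps0" "c = repr_sum ps0" using assms(1) by (auto simp: Xspace_def)
  show ?thesis
  proof (cases "C = 0")
    case True
    then show ?thesis using assms(3)[OF ps0] by simp
  next
    case False
    with assms(2) have C: "C > 0" by simp
    have "x / C \<le> Xnorm c"
      unfolding Xnorm_def repr_cost_def[symmetric]
      by (rule cInf_greatest) (use ps0 assms(3) C in \<open>auto simp: pos_divide_le_eq mult.commute\<close>)
    then show ?thesis using C by (simp add: pos_divide_le_eq mult.commute)
  qed
qed

lemma Xnorm_nonneg: "c \<in> Xspace \<Longrightarrow> Xnorm c \<ge> 0"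
  using le_mult_Xnorm[of c 1 0] repr_cost_nonneg by simp

subsection \<open>Pairing with \<alpha> is an isometry from M into the dual of X\<close>

lemma pairing_le_M_norm_Xnorm:
  assumes "M_bounded \<alpha>" "c \<in> Xspace"
  shows "cmod (pairing \<alpha> c) \<le> M_norm \<alpha> * Xnorm c"
proof (rule le_mult_Xnorm[OF assms(2) M_norm_nonneg[OF assms(1)]])
  fix ps assume ps: "valid_repr ps" "c = repr_sum ps"
  have "cmod (pairing \<alpha> c) \<le> (\<Sum>p\<leftarrow>ps. cmod (Mform \<alpha> (fst p) (snd p)))"
    unfolding ps(2) pairing_repr_sum[OF ps(1)] by (rule norm_sum_list_le)
  also have "\<dots> \<le> (\<Sum>p\<leftarrow>ps. M_norm \<alpha> * (l2norm (fst p) * l2norm (snd p)))"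
    using ps(1) Mform_le_M_norm[OF assms(1)]
    by (intro sum_list_mono) (auto simp: valid_repr_def mult.assoc)
  also have "\<dots> = M_norm \<alpha> * repr_cost ps"
    by (simp add: repr_cost_def sum_list_const_mult)
  finally show "cmod (pairing \<alpha> c) \<le> M_norm \<alpha> * repr_cost ps" .
qed

lemma linear_on_X_pairing: "linear_on_X (pairing \<alpha>)"
  unfolding linear_on_X_def
  using Xspace_imp_fin_supp pairing_add pairing_scale by (auto simp: fin_supp_def)

lemma dual_norm_X_pairing:
  assumes "M_bounded \<alpha>"
  shows "dual_norm_X (pairing \<alpha>) = M_norm \<alpha>"
proof (rule antisym)
  let ?S = "{cmod (pairing \<alpha> c) | c. c \<in> Xspace \<and> Xnorm c \<le> 1}"
  have bound: "x \<le> M_norm \<alpha>" if x: "x \<in> ?S" for x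
  proof -
    obtain c where c: "c \<in> Xspace" "Xnorm c \<le> 1" "x = cmod (pairing \<alpha> c)"
      using x by blast
    have "x \<le> M_norm \<alpha> * Xnorm c" using pairing_le_M_norm_Xnorm[OF assms c(1)] c(3) by simp
    also have "\<dots> \<le> M_norm \<alpha>"
      using mult_left_mono[OF c(2) M_norm_nonneg[OF assms]] by simp
    finally show ?thesis .
  qed
  then have bdd: "bdd_above ?S" by (rule bdd_aboveI)
  have "Xnorm (\<lambda>n. 0) \<le> 1"
    using Xnorm_le_repr_cost[of "[]"] by (simp add: valid_repr_def repr_sum_def repr_cost_def)
  then have "?S \<noteq> {}" using zero_in_Xspace by blast
  then show "dual_norm_X (pairing \<alpha>) \<le> M_norm \<alpha>"
    unfolding dual_norm_X_def by (rule cSup_least) (rule bound)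
  have "{cmod (Mform \<alpha> a b) | a b. fin_supp a \<and> fin_supp b \<and> l2norm a \<le> 1 \<and> l2norm b \<le> 1} \<noteq> {}"
    using fin_supp_zero l2norm_zero by fastforce
  then show "M_norm \<alpha> \<le> dual_norm_X (pairing \<alpha>)"
    unfolding M_norm_def
  proof (rule cSup_least, clarify)
    fix a b assume ab: "fin_supp a" "fin_supp b" "l2norm a \<le> 1" "l2norm b \<le> 1"
    have "Xnorm (dconv a b) \<le> l2norm a * l2norm b" using Xnorm_dconv_le ab by simp
    also have "\<dots> \<le> 1" using ab l2norm_nonneg by (simp add: mult_le_one)
    finally have "cmod (pairing \<alpha> (dconv a b)) \<in> ?S" using dconv_in_Xspace[OF ab(1,2)] by auto
    then have "cmod (pairing \<alpha> (dconv a b)) \<le> dual_norm_X (pairing \<alpha>)"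
      unfolding dual_norm_X_def using bdd by (rule cSup_upper)
    then show "cmod (Mform \<alpha> a b) \<le> dual_norm_X (pairing \<alpha>)" using pairing_dconv ab by simp
  qed
qed

subsection \<open>Every bounded functional on X is a pairing\<close>

lemma sum_delta_in_Xspace:
  "finite F \<Longrightarrow> F \<subseteq> {0<..} \<Longrightarrow> (\<lambda>x. \<Sum>n\<in>F. w n * delta n x) \<in> Xspace"
  by (induction F rule: finite_induct)
     (auto intro!: zero_in_Xspace add_in_Xspace[OF scale_in_Xspace[OF delta_in_Xspace]])

lemma linear_on_X_sum_delta:
  assumes L: "linear_on_X L"
  shows "finite F \<Longrightarrow> F \<subseteq> {0<..} \<Longrightarrow>
    L (\<lambda>x. \<Sum>n\<in>F. w n * delta n x) = (\<Sum>n\<in>F. w n * L (delta n))"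
proof (induction F rule: finite_induct)
  case empty
  have "\<forall>c\<in>Xspace. \<forall>s. L (\<lambda>n. s * c n) = s * L c"
    using L by (simp add: linear_on_X_def)
  from this[rule_format, OF zero_in_Xspace, of 0] show ?case by simp
next
  case (insert j F)
  have j: "(\<lambda>x. w j * delta j x) \<in> Xspace" and F: "(\<lambda>x. \<Sum>n\<in>F. w n * delta n x) \<in> Xspace"
    using insert.prems insert.hyps by (auto intro: scale_in_Xspace delta_in_Xspace sum_delta_in_Xspace)
  have "L (\<lambda>x. \<Sum>n\<in>insert j F. w n * delta n x)
      = L (\<lambda>x. w j * delta j x) + L (\<lambda>x. \<Sum>n\<in>F. w n * delta n x)"
    using L j F insert.hyps unfolding linear_on_X_def by simp
  also have "L (\<lambda>x. w j * delta j x) = w j * L (delta j)"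
    using L delta_in_Xspace insert.prems unfolding linear_on_X_def by simp
  finally show ?case using insert by simp
qed

lemma fin_supp_eq_sum_delta:
  assumes "finite (supp_seq c)"
  shows "c = (\<lambda>x. \<Sum>n\<in>supp_seq c. c n * delta n x)"
proof
  fix x
  have "(\<Sum>n\<in>supp_seq c. c n * delta n x) = (\<Sum>n\<in>supp_seq c. if n = x then c n else 0)"
    by (rule sum.cong) (auto simp: delta_def)
  also have "\<dots> = c x" using assms by (auto simp: sum.delta' supp_seq_def)
  finally show "c x = (\<Sum>n\<in>supp_seq c. c n * delta n x)" by simp
qed

lemma linear_on_X_eq_pairing:
  assumes L: "linear_on_X L" and c: "c \<in> Xspace"
  shows "L c = pairing (\<lambda>n. L (delta n)) c"
proof -
  have fin: "finite (supp_seq c)" and pos: "supp_seq c \<subseteq> {0<..}"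
    using Xspace_imp_fin_supp[OF c] by (auto simp: fin_supp_def supp_seq_def intro: gr0I)
  have "L c = L (\<lambda>x. \<Sum>n\<in>supp_seq c. c n * delta n x)"
    using fin_supp_eq_sum_delta[OF fin] by simp
  also have "\<dots> = (\<Sum>n\<in>supp_seq c. c n * L (delta n))"
    using linear_on_X_sum_delta[OF L fin pos] .
  finally show ?thesis by (simp add: pairing_def mult.commute)
qed

lemma M_bounded_if_bounded_on_X:
  assumes L: "linear_on_X L" and B: "bounded_on_X L"
  shows "M_bounded (\<lambda>n. L (delta n))"
  unfolding M_bounded_def
proof -
  obtain C where C: "\<And>c. c \<in> Xspace \<Longrightarrow> cmod (L c) \<le> C * Xnorm c"
    using B by (auto simp: bounded_on_X_def)
  have "cmod (Mform (\<lambda>n. L (delta n)) a b) \<le> max C 0 * l2norm a * l2norm b"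
    if a: "fin_supp a" and b: "fin_supp b" for a b
  proof -
    have ab: "dconv a b \<in> Xspace" using dconv_in_Xspace a b by simp
    have "cmod (Mform (\<lambda>n. L (delta n)) a b) = cmod (L (dconv a b))"
      using linear_on_X_eq_pairing[OF L ab] pairing_dconv[OF a b] by simp
    also have "\<dots> \<le> C * Xnorm (dconv a b)"
      using C[OF ab] .
    also have "\<dots> \<le> max C 0 * Xnorm (dconv a b)"
      using Xnorm_nonneg[OF ab] by (intro mult_right_mono) auto
    also have "\<dots> \<le> max C 0 * (l2norm a * l2norm b)"
      by (rule mult_left_mono) (auto simp: Xnorm_dconv_le a b)
    finally show ?thesis by (simp add: mult.assoc)
  qed
  then show "\<exists>C. \<forall>a b. fin_supp a \<longrightarrow> fin_supp b \<longrightarrow>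
      cmod (Mform (\<lambda>n. L (delta n)) a b) \<le> C * l2norm a * l2norm b"
    by blast
qed

theorem lemma7:
  shows "(\<forall>\<alpha>. M_bounded \<alpha> \<longrightarrow>
            linear_on_X (pairing \<alpha>) \<and> bounded_on_X (pairing \<alpha>) \<and>
            dual_norm_X (pairing \<alpha>) = M_norm \<alpha>)
       \<and> (\<forall>L. linear_on_X L \<and> bounded_on_X L \<longrightarrow>
            (\<exists>\<alpha>. M_bounded \<alpha> \<and> (\<forall>c\<in>Xspace. L c = pairing \<alpha> c)))"
proof (rule conjI; intro allI impI)
  fix \<alpha> assume "M_bounded \<alpha>"
  then show "linear_on_X (pairing \<alpha>) \<and> bounded_on_X (pairing \<alpha>) \<and> dual_norm_X (pairing \<alpha>) = M_norm \<alpha>"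
    using linear_on_X_pairing pairing_le_M_norm_Xnorm dual_norm_X_pairing
    by (auto simp: bounded_on_X_def)
next
  fix L assume "linear_on_X L \<and> bounded_on_X L"
  then show "\<exists>\<alpha>. M_bounded \<alpha> \<and> (\<forall>c\<in>Xspace. L c = pairing \<alpha> c)"
    using M_bounded_if_bounded_on_X linear_on_X_eq_pairing by blast
qed

end
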